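(* Let $d\ge 1$ and $c\ge 1$, let $\mathcal C$ be a finite collection of $c$-fat objects in $\mathbb R^d$, and let $G$ be the intersection graph of $\mathcal C$. Let $t\ge 0$ be an integer and let $\mathcal C^t$ be a collection of nonempty subsets of $\mathcal C$ such that for each $\mathcal X\in\mathcal C^t$ the induced subgraph $G_{\mathcal X}$ of $G$ on $\mathcal X$ is connected and has diameter at most $t$. Identify each $\mathcal X\in\mathcal C^t$ with the object $\bigcup_{O\in\mathcal X}O\subseteq\mathbb R^d$. Then $\mathcal C^t$ is a collection of $c'$-fat objects in $\mathbb R^d$ with $c'\le C_d\cdot c\cdot (t+1)^{2d}$, where $C_d$ is a constant depending only on $d$.
   Context: An object is a bounded subset of $\mathbb R^d$. The size of an object is the side length of its smallest enclosing axis-parallel hypercube; a box of size $r$ is an axis-parallel hypercube of side length $r$. A collection $\mathcal C$ of objects in $\mathbb R^d$ is $c$-fat (for $c\ge 1$) if for every $r\ge 0$ and every box $B$ of size $r$ there is a set of at most $c$ points of $\mathbb R^d$ such that every object of $\mathcal C$ of size at least $r$ that intersects $B$ contains at least one of these points. The intersection graph of $\mathcal C$ has vertex set $\mathcal C$, two objects being adjacent iff they intersect. *)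

theory Defs
  imports "HOL-Analysis.Analysis"
begin

text \<open>Size of a (bounded, nonempty) object: side length of its smallest enclosing
  axis-parallel hypercube, i.e. the maximal coordinate extent.\<close>
definition obj_size :: "'a::euclidean_space set \<Rightarrow> real" where
  "obj_size S = Max ((\<lambda>i. Sup ((\<lambda>x. x \<bullet> i) ` S) - Inf ((\<lambda>x. x \<bullet> i) ` S)) ` Basis)"

definition hcube :: "'a::euclidean_space \<Rightarrow> real \<Rightarrow> 'a set" where
  "hcube a r = cbox a (a + r *\<^sub>R One)"

definition fat :: "real \<Rightarrow> 'a::euclidean_space set set \<Rightarrow> bool" where
  "fat c \<C> \<longleftrightarrow> (\<forall>r\<ge>0. \<forall>a. \<exists>P. finite P \<and> real (card P) \<le> c \<and>
      (\<forall>S\<in>\<C>. obj_size S \<ge> r \<and> S \<inter> hcube a r \<noteq> {} \<longrightarrow> S \<inter> P \<noteq> {}))"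

definition ig_walk :: "'a set set \<Rightarrow> 'a set \<Rightarrow> 'a set \<Rightarrow> nat \<Rightarrow> bool" where
  "ig_walk X u v k \<longleftrightarrow> (\<exists>ps. length ps = Suc k \<and> hd ps = u \<and> last ps = v \<and> set ps \<subseteq> X \<and>
      (\<forall>i<k. ps ! i \<noteq> ps ! Suc i \<and> ps ! i \<inter> ps ! Suc i \<noteq> {}))"

definition conn_diam_le :: "'a set set \<Rightarrow> nat \<Rightarrow> bool" where
  "conn_diam_le X t \<longleftrightarrow> (\<forall>u\<in>X. \<forall>v\<in>X. \<exists>k\<le>t. ig_walk X u v k)"

end

theory Submission
  imports Defs
begin

text \<open>Let \<open>S = \<Union>X\<close> meet a box \<open>B\<close> of size \<open>r \<le> size S\<close> and put \<open>s = r / (t + 1)\<close>.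
  Any two points of \<open>S\<close> are linked by a chain of at most \<open>t + 1\<close> members of \<open>X\<close>, so the
  largest member of \<open>X\<close> has size at least \<open>s\<close>. On a walk of at most \<open>t\<close> steps from a
  member meeting \<open>B\<close> to that largest member, each member of size \<open>< s\<close> stays inside \<open>B\<close>
  enlarged by \<open>s\<close> per step, so the first member of size \<open>\<ge> s\<close> meets \<open>B\<close> enlarged by
  \<open>t s\<close> on every side, a box of size \<open>(3t + 1) s\<close>. Cutting it into \<open>(3t + 1)^d\<close> boxes of
  size \<open>s\<close> and using the fatness of \<open>\<C>\<close> in each gives \<open>(3t + 1)^d c \<le> 3^d c (t + 1)^(2d)\<close>
  piercing points.\<close>

lemma mem_hcube:
  "x \<in> hcube a r \<longleftrightarrow> (\<forall>i\<in>Basis. a \<bullet> i \<le> x \<bullet> i \<and> x \<bullet> i \<le> a \<bullet> i + r)"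
  by (simp add: hcube_def mem_box inner_add_left)

lemma hcube_grow_mono:
  fixes a :: "'a::euclidean_space"
  assumes "\<delta> \<le> \<delta>'"
  shows "hcube (a - \<delta> *\<^sub>R One) (r + 2 * \<delta>) \<subseteq> hcube (a - \<delta>' *\<^sub>R One) (r + 2 * \<delta>')"
proof
  fix x assume x: "x \<in> hcube (a - \<delta> *\<^sub>R One) (r + 2 * \<delta>)"
  have "a \<bullet> i - \<delta>' \<le> x \<bullet> i \<and> x \<bullet> i \<le> a \<bullet> i + r + \<delta>'" if "i \<in> Basis" for i
    using x that assms by (auto simp: mem_hcube inner_diff_left dest!: bspec[of _ _ i])
  then show "x \<in> hcube (a - \<delta>' *\<^sub>R One) (r + 2 * \<delta>')"
    by (simp add: mem_hcube inner_diff_left ac_simps)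
qed

lemma obj_size_coord_diff_le:
  fixes S :: "'a::euclidean_space set"
  assumes "bounded S" "x \<in> S" "y \<in> S" "i \<in> Basis"
  shows "x \<bullet> i - y \<bullet> i \<le> obj_size S"
proof -
  have b: "bounded ((\<lambda>x. x \<bullet> i) ` S)"
    using assms(1) by (rule bounded_linear_image) (rule bounded_linear_inner_left)
  have "x \<bullet> i \<le> Sup ((\<lambda>x. x \<bullet> i) ` S)"
    using b assms by (intro cSup_upper) (auto intro: bounded_imp_bdd_above)
  moreover have "Inf ((\<lambda>x. x \<bullet> i) ` S) \<le> y \<bullet> i"
    using b assms by (intro cInf_lower) (auto intro: bounded_imp_bdd_below)
  moreover have "Sup ((\<lambda>x. x \<bullet> i) ` S) - Inf ((\<lambda>x. x \<bullet> i) ` S) \<le> obj_size S"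
    unfolding obj_size_def using assms(4) by (intro Max_ge) auto
  ultimately show ?thesis by linarith
qed

lemma obj_size_nonneg:
  fixes S :: "'a::euclidean_space set"
  assumes "bounded S" "x \<in> S"
  shows "0 \<le> obj_size S"
proof -
  obtain i :: 'a where "i \<in> Basis" using nonempty_Basis by blast
  from obj_size_coord_diff_le[OF assms assms(2) this] show ?thesis by simp
qed

lemma obj_size_le:
  fixes S :: "'a::euclidean_space set"
  assumes "S \<noteq> {}" "\<And>x y i. x \<in> S \<Longrightarrow> y \<in> S \<Longrightarrow> i \<in> Basis \<Longrightarrow> x \<bullet> i - y \<bullet> i \<le> K"
  shows "obj_size S \<le> K"
  unfolding obj_size_def
proof (rule Max.boundedI; clarsimp)
  fix i :: 'a assume i: "i \<in> Basis"
  have "x \<bullet> i - K \<le> Inf ((\<lambda>x. x \<bullet> i) ` S)" if "x \<in> S" for x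
  proof (rule cInf_greatest)
    show "(\<lambda>x. x \<bullet> i) ` S \<noteq> {}" using assms(1) by simp
    fix t assume "t \<in> (\<lambda>x. x \<bullet> i) ` S"
    then obtain y where "y \<in> S" "t = y \<bullet> i" by blast
    with assms(2)[OF that \<open>y \<in> S\<close> i] show "x \<bullet> i - K \<le> t" by simp
  qed
  then have "Sup ((\<lambda>x. x \<bullet> i) ` S) \<le> Inf ((\<lambda>x. x \<bullet> i) ` S) + K"
    using assms(1) by (intro cSup_least) (auto simp: algebra_simps)
  then show "Sup ((\<lambda>x. x \<bullet> i) ` S) - Inf ((\<lambda>x. x \<bullet> i) ` S) \<le> K" by simp
qed

lemma subset_hcube_grow:
  fixes S :: "'a::euclidean_space set"
  assumes "bounded S" "p \<in> S" "p \<in> hcube a r" "obj_size S \<le> \<delta>"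
  shows "S \<subseteq> hcube (a - \<delta> *\<^sub>R One) (r + 2 * \<delta>)"
proof
  fix z assume z: "z \<in> S"
  have "a \<bullet> i - \<delta> \<le> z \<bullet> i \<and> z \<bullet> i \<le> a \<bullet> i + r + \<delta>" if i: "i \<in> Basis" for i
    using obj_size_coord_diff_le[OF assms(1) z assms(2) i] obj_size_coord_diff_le[OF assms(1) assms(2) z i]
      assms(3,4) i by (auto simp: mem_hcube)
  then show "z \<in> hcube (a - \<delta> *\<^sub>R One) (r + 2 * \<delta>)"
    by (simp add: mem_hcube inner_diff_left ac_simps)
qed

lemma fatD:
  assumes "fat c \<C>" "0 \<le> r"
  shows "\<exists>P. finite P \<and> real (card P) \<le> c \<and>
    (\<forall>S\<in>\<C>. r \<le> obj_size S \<and> S \<inter> hcube a r \<noteq> {} \<longrightarrow> S \<inter> P \<noteq> {})"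
  using assms unfolding fat_def by simp

lemma fat_nonneg:
  assumes "fat c \<C>"
  shows "0 \<le> c"
proof -
  obtain P :: "'a set" where "real (card P) \<le> c"
    using fatD[OF assms order_refl, of 0] by blast
  then show ?thesis using of_nat_0_le_iff[of "card P"] by linarith
qed

lemma fat_mono: "fat c \<C> \<Longrightarrow> c \<le> c' \<Longrightarrow> fat c' \<C>"
  unfolding fat_def by (meson order_trans)

lemma exists_unit_interval:
  fixes q :: real
  assumes "0 \<le> q" "q \<le> real N" "0 < N"
  obtains n where "n < N" "real n \<le> q" "q \<le> real n + 1"
proof (cases "q < real N")
  case True
  then show ?thesis
    using that[of "nat \<lfloor>q\<rfloor>"] assms(1) by linarith
next
  case False
  then show ?thesis
    using that[of "N - 1"] assms by (simp add: of_nat_diff)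
qed

lemma hcube_subset_grid:
  fixes b :: "'a::euclidean_space"
  assumes "0 < s" "0 < N"
  shows "hcube b (real N * s) \<subseteq>
    (\<Union>v\<in>Basis \<rightarrow>\<^sub>E {..<N}. hcube (b + (\<Sum>i\<in>Basis. (s * real (v i)) *\<^sub>R i)) s)"
proof
  fix w assume w: "w \<in> hcube b (real N * s)"
  have "\<exists>n<N. real n \<le> (w \<bullet> i - b \<bullet> i) / s \<and> (w \<bullet> i - b \<bullet> i) / s \<le> real n + 1"
    if "i \<in> Basis" for i
  proof -
    have "0 \<le> (w \<bullet> i - b \<bullet> i) / s" "(w \<bullet> i - b \<bullet> i) / s \<le> real N"
      using w that assms(1) by (auto simp: mem_hcube field_simps)
    then show ?thesis by (metis exists_unit_interval assms(2))
  qed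
  then obtain f where f: "\<And>i. i \<in> Basis \<Longrightarrow> f i < N \<and>
      real (f i) \<le> (w \<bullet> i - b \<bullet> i) / s \<and> (w \<bullet> i - b \<bullet> i) / s \<le> real (f i) + 1"
    by metis
  define v where "v = restrict f Basis"
  have v: "v \<in> Basis \<rightarrow>\<^sub>E {..<N}" using f by (simp add: v_def)
  have "w \<in> hcube (b + (\<Sum>i\<in>Basis. (s * real (v i)) *\<^sub>R i)) s"
    unfolding mem_hcube
  proof
    fix i :: 'a assume i: "i \<in> Basis"
    have "(b + (\<Sum>j\<in>Basis. (s * real (v j)) *\<^sub>R j)) \<bullet> i = b \<bullet> i + s * real (f i)"
      using i by (simp add: v_def inner_add_left inner_sum_left inner_Basis if_distrib cong: if_cong)
    moreover have "s * real (f i) \<le> w \<bullet> i - b \<bullet> i" "w \<bullet> i - b \<bullet> i \<le> s * real (f i) + s"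
      using f[OF i] assms(1) by (simp_all add: pos_le_divide_eq pos_divide_le_eq algebra_simps)
    ultimately show "(b + (\<Sum>j\<in>Basis. (s * real (v j)) *\<^sub>R j)) \<bullet> i \<le> w \<bullet> i \<and>
        w \<bullet> i \<le> (b + (\<Sum>j\<in>Basis. (s * real (v j)) *\<^sub>R j)) \<bullet> i + s"
      by linarith
  qed
  then show "w \<in> (\<Union>v\<in>Basis \<rightarrow>\<^sub>E {..<N}. hcube (b + (\<Sum>i\<in>Basis. (s * real (v i)) *\<^sub>R i)) s)"
    using v by blast
qed

lemma fat_pierce_UN_hcube:
  assumes "fat c \<C>" "0 \<le> s" "finite V"
  shows "\<exists>P. finite P \<and> real (card P) \<le> real (card V) * c \<and>
    (\<forall>S\<in>\<C>. s \<le> obj_size S \<and> S \<inter> (\<Union>v\<in>V. hcube (g v) s) \<noteq> {} \<longrightarrow> S \<inter> P \<noteq> {})"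
proof -
  have "\<exists>P. finite P \<and> real (card P) \<le> c \<and>
      (\<forall>S\<in>\<C>. s \<le> obj_size S \<and> S \<inter> hcube (g v) s \<noteq> {} \<longrightarrow> S \<inter> P \<noteq> {})" for v
    by (rule fatD[OF assms(1,2)])
  then obtain Pv where Pv: "\<And>v. finite (Pv v)" "\<And>v. real (card (Pv v)) \<le> c"
    "\<And>v S. S \<in> \<C> \<Longrightarrow> s \<le> obj_size S \<Longrightarrow> S \<inter> hcube (g v) s \<noteq> {} \<Longrightarrow> S \<inter> Pv v \<noteq> {}"
    by metis
  have "real (card (\<Union>v\<in>V. Pv v)) \<le> (\<Sum>v\<in>V. real (card (Pv v)))"
    by (metis card_UN_le assms(3) of_nat_le_iff of_nat_sum)
  also have "\<dots> \<le> real (card V) * c"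
    using sum_mono[of V "\<lambda>v. real (card (Pv v))" "\<lambda>_. c"] Pv(2) by simp
  finally have card: "real (card (\<Union>v\<in>V. Pv v)) \<le> real (card V) * c" .
  show ?thesis
  proof (intro exI[of _ "\<Union>v\<in>V. Pv v"] conjI ballI impI)
    show "finite (\<Union>v\<in>V. Pv v)" by (simp add: Pv(1) assms(3))
    fix S assume S: "S \<in> \<C>" "s \<le> obj_size S \<and> S \<inter> (\<Union>v\<in>V. hcube (g v) s) \<noteq> {}"
    then obtain v where "v \<in> V" "S \<inter> hcube (g v) s \<noteq> {}" by blast
    then show "S \<inter> (\<Union>v\<in>V. Pv v) \<noteq> {}" using Pv(3)[of S v] S by blast
  qed (rule card)
qed

lemma fat_hcube_multiple:
  fixes b :: "'a::euclidean_space"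
  assumes "fat c \<C>" "0 \<le> s" "0 < N"
  shows "\<exists>P. finite P \<and> real (card P) \<le> real N ^ DIM('a) * c \<and>
    (\<forall>S\<in>\<C>. s \<le> obj_size S \<and> S \<inter> hcube b (real N * s) \<noteq> {} \<longrightarrow> S \<inter> P \<noteq> {})"
proof (cases "s = 0")
  case True
  obtain P where P: "finite P" "real (card P) \<le> c"
    "\<forall>S\<in>\<C>. s \<le> obj_size S \<and> S \<inter> hcube b s \<noteq> {} \<longrightarrow> S \<inter> P \<noteq> {}"
    using fatD[OF assms(1,2), of b] by blast
  have "1 \<le> real N ^ DIM('a)" using assms(3) by simp
  then have "c \<le> real N ^ DIM('a) * c"
    using mult_right_mono[OF _ fat_nonneg[OF assms(1)]] by fastforce
  then show ?thesis
    using P True by (intro exI[of _ P]) simp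
next
  case False
  define V where "V = (Basis :: 'a set) \<rightarrow>\<^sub>E {..<N}"
  define corner where "corner v = b + (\<Sum>i\<in>Basis. (s * real (v i)) *\<^sub>R i)" for v
  have "finite V" by (simp add: V_def finite_PiE)
  then obtain P where P: "finite P" "real (card P) \<le> real (card V) * c"
    "\<forall>S\<in>\<C>. s \<le> obj_size S \<and> S \<inter> (\<Union>v\<in>V. hcube (corner v) s) \<noteq> {} \<longrightarrow> S \<inter> P \<noteq> {}"
    using fat_pierce_UN_hcube[OF assms(1,2), of V corner] by blast
  have "card V = N ^ DIM('a)" by (simp add: V_def card_PiE)
  with P(2) have "real (card P) \<le> real N ^ DIM('a) * c" by simp
  moreover have grid: "hcube b (real N * s) \<subseteq> (\<Union>v\<in>V. hcube (corner v) s)"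
    using hcube_subset_grid[of s N b] assms False unfolding V_def corner_def by simp
  have "S \<inter> P \<noteq> {}"
    if "S \<in> \<C>" "s \<le> obj_size S" "S \<inter> hcube b (real N * s) \<noteq> {}" for S
  proof -
    have "S \<inter> (\<Union>v\<in>V. hcube (corner v) s) \<noteq> {}"
      using that(3) grid by auto
    then show ?thesis using P(3) that(1,2) by simp
  qed
  ultimately show ?thesis
    using P(1) by (intro exI[of _ P]) simp
qed

lemma ig_walk_nth:
  assumes "ig_walk X u v k"
  shows "\<exists>ps. ps ! 0 = u \<and> ps ! k = v \<and> (\<forall>m\<le>k. ps ! m \<in> X) \<and>
    (\<forall>m<k. ps ! m \<inter> ps ! Suc m \<noteq> {})"
proof -
  obtain ps where ps: "length ps = Suc k" "hd ps = u" "last ps = v" "set ps \<subseteq> X"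
      "\<forall>i<k. ps ! i \<noteq> ps ! Suc i \<and> ps ! i \<inter> ps ! Suc i \<noteq> {}"
    using assms unfolding ig_walk_def by blast
  have "ps \<noteq> []" using ps(1) by auto
  then have "ps ! 0 = u" "ps ! k = v" using ps by (auto simp: hd_conv_nth last_conv_nth)
  moreover have "\<forall>m\<le>k. ps ! m \<in> X"
    using ps(1,4) by (metis le_imp_less_Suc nth_mem subsetD)
  ultimately show ?thesis using ps(5) by blast
qed

lemma ig_walk_coord_diff_le:
  fixes X :: "'a::euclidean_space set set"
  assumes "ig_walk X u v k" "\<And>Q. Q \<in> X \<Longrightarrow> bounded Q"
    "\<And>Q. Q \<in> X \<Longrightarrow> Q \<noteq> {} \<Longrightarrow> obj_size Q \<le> M"
    "x \<in> u" "z \<in> v" "i \<in> Basis"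
  shows "x \<bullet> i - z \<bullet> i \<le> real (Suc k) * M"
proof -
  obtain ps where ps: "ps ! 0 = u" "ps ! k = v" "\<forall>m\<le>k. ps ! m \<in> X"
    "\<forall>m<k. ps ! m \<inter> ps ! Suc m \<noteq> {}"
    using ig_walk_nth[OF assms(1)] by blast
  have step: "w \<bullet> i - y \<bullet> i \<le> M" if "m \<le> k" "w \<in> ps ! m" "y \<in> ps ! m" for m w y
    using obj_size_coord_diff_le[OF assms(2)[OF ps(3)[rule_format]] _ _ assms(6)]
      assms(3)[OF ps(3)[rule_format]] that
    by fastforce
  have "\<forall>y\<in>ps ! m. x \<bullet> i - y \<bullet> i \<le> real (Suc m) * M" if "m \<le> k" for m
    using that
  proof (induction m)
    case 0
    then show ?case using step[of 0 x] assms(4) ps(1) by simp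
  next
    case (Suc m)
    obtain w where w: "w \<in> ps ! m" "w \<in> ps ! Suc m"
      using ps(4)[rule_format, of m] Suc.prems by auto
    have "x \<bullet> i - w \<bullet> i \<le> real (Suc m) * M" using Suc w by simp
    moreover have "real (Suc (Suc m)) * M = real (Suc m) * M + M" by (simp add: algebra_simps)
    ultimately show ?case using step[OF Suc.prems w(2)] by fastforce
  qed
  then show ?thesis using ps(2) assms(5) by auto
qed

lemma obj_size_Union_le:
  fixes X :: "'a::euclidean_space set set"
  assumes "conn_diam_le X t" "\<And>Q. Q \<in> X \<Longrightarrow> bounded Q"
    "\<And>Q. Q \<in> X \<Longrightarrow> Q \<noteq> {} \<Longrightarrow> obj_size Q \<le> M" "0 \<le> M" "\<Union>X \<noteq> {}"
  shows "obj_size (\<Union>X) \<le> real (Suc t) * M"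
proof (rule obj_size_le[OF assms(5)])
  fix x y and i :: 'a assume "x \<in> \<Union>X" "y \<in> \<Union>X" "i \<in> Basis"
  then obtain u v where uv: "u \<in> X" "v \<in> X" "x \<in> u" "y \<in> v" by blast
  then obtain k where "k \<le> t" "ig_walk X u v k"
    using assms(1) unfolding conn_diam_le_def by blast
  then have "x \<bullet> i - y \<bullet> i \<le> real (Suc k) * M"
    using ig_walk_coord_diff_le assms(2,3) uv \<open>i \<in> Basis\<close> by blast
  also have "\<dots> \<le> real (Suc t) * M"
    using \<open>k \<le> t\<close> assms(4) by (intro mult_right_mono) auto
  finally show "x \<bullet> i - y \<bullet> i \<le> real (Suc t) * M" .
qed

lemma conn_diam_le_exists_large_member:
  fixes X :: "'a::euclidean_space set set"
  assumes "finite X" "conn_diam_le X t" "\<And>Q. Q \<in> X \<Longrightarrow> bounded Q" "\<Union>X \<noteq> {}"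
    "real (Suc t) * s \<le> obj_size (\<Union>X)"
  shows "\<exists>v\<in>X. s \<le> obj_size v"
proof -
  define Y where "Y = {Q \<in> X. Q \<noteq> {}}"
  have "finite Y" "Y \<noteq> {}" using assms(1,4) by (auto simp: Y_def)
  define M where "M = Max (obj_size ` Y)"
  have "M \<in> obj_size ` Y"
    unfolding M_def using \<open>finite Y\<close> \<open>Y \<noteq> {}\<close> by (intro Max_in) auto
  then obtain v where v: "v \<in> Y" "obj_size v = M" by blast
  have "0 \<le> M"
    using v obj_size_nonneg[OF assms(3)] by (force simp: Y_def)
  moreover have "obj_size Q \<le> M" if "Q \<in> X" "Q \<noteq> {}" for Q
    using that \<open>finite Y\<close> by (auto simp: M_def Y_def)
  ultimately have "obj_size (\<Union>X) \<le> real (Suc t) * M"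
    using obj_size_Union_le[OF assms(2,3) _ _ assms(4)] by blast
  then have "s \<le> M"
    using assms(5) by (smt (verit) mult_le_cancel_left_pos of_nat_0_less_iff zero_less_Suc)
  then show ?thesis using v by (auto simp: Y_def)
qed

lemma ig_walk_large_member_near:
  fixes X :: "'a::euclidean_space set set"
  assumes "ig_walk X u v k" "\<And>Q. Q \<in> X \<Longrightarrow> bounded Q" "u \<inter> hcube a r \<noteq> {}"
    "s \<le> obj_size v" "0 \<le> s"
  shows "\<exists>Q\<in>X. s \<le> obj_size Q \<and> Q \<inter> hcube (a - (real k * s) *\<^sub>R One) (r + 2 * (real k * s)) \<noteq> {}"
proof -
  define B where "B m = hcube (a - (real m * s) *\<^sub>R One) (r + 2 * (real m * s))" for m
  have B_mono: "B m \<subseteq> B (Suc m)" for m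
    unfolding B_def using assms(5) by (intro hcube_grow_mono) (simp add: distrib_right)
  obtain ps where ps: "ps ! 0 = u" "ps ! k = v" "\<forall>m\<le>k. ps ! m \<in> X"
    "\<forall>m<k. ps ! m \<inter> ps ! Suc m \<noteq> {}"
    using ig_walk_nth[OF assms(1)] by blast
  have "ps ! m \<inter> B m \<noteq> {} \<or> (\<exists>Q\<in>X. s \<le> obj_size Q \<and> Q \<inter> B m \<noteq> {})" if "m \<le> k" for m
    using that
  proof (induction m)
    case 0
    then show ?case using assms(3) ps(1) by (simp add: B_def)
  next
    case (Suc m)
    then consider "\<exists>Q\<in>X. s \<le> obj_size Q \<and> Q \<inter> B m \<noteq> {}"
      | "ps ! m \<inter> B m \<noteq> {}" "s \<le> obj_size (ps ! m)"
      | "ps ! m \<inter> B m \<noteq> {}" "obj_size (ps ! m) < s"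
      by fastforce
    then show ?case
    proof cases
      case 1
      then show ?thesis using B_mono[of m] by blast
    next
      case 2
      then show ?thesis using B_mono[of m] ps(3)[rule_format, of m] Suc.prems by fastforce
    next
      case 3
      then obtain p where "p \<in> ps ! m" "p \<in> B m" by blast
      then have "ps ! m \<subseteq> hcube (a - (real m * s) *\<^sub>R One - s *\<^sub>R One) (r + 2 * (real m * s) + 2 * s)"
        using subset_hcube_grow[OF assms(2)[OF ps(3)[rule_format]]] 3(2) Suc.prems
        unfolding B_def by simp
      also have "\<dots> = B (Suc m)" by (simp add: B_def algebra_simps)
      finally have "ps ! m \<subseteq> B (Suc m)" .
      moreover have "ps ! m \<inter> ps ! Suc m \<noteq> {}" using ps(4) Suc.prems by simp
      ultimately show ?thesis by blast
    qed
  qed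
  from this[of k] show ?thesis
    using ps(2) ps(3)[rule_format, of k] assms(4) unfolding B_def by blast
qed

lemma conn_diam_le_large_member_near:
  fixes X :: "'a::euclidean_space set set"
  assumes "finite X" "conn_diam_le X t" "\<And>Q. Q \<in> X \<Longrightarrow> bounded Q" "0 \<le> s"
    "real (Suc t) * s \<le> obj_size (\<Union>X)" "u \<in> X" "u \<inter> hcube a r \<noteq> {}"
  shows "\<exists>Q\<in>X. s \<le> obj_size Q \<and>
    Q \<inter> hcube (a - (real t * s) *\<^sub>R One) (r + 2 * (real t * s)) \<noteq> {}"
proof -
  have "\<Union>X \<noteq> {}" using assms(6,7) by blast
  then obtain v where "v \<in> X" "s \<le> obj_size v"
    using conn_diam_le_exists_large_member[OF assms(1-3) _ assms(5)] by blast
  then obtain k where "k \<le> t" "ig_walk X u v k"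
    using assms(2,6) unfolding conn_diam_le_def by blast
  then obtain Q where Q: "Q \<in> X" "s \<le> obj_size Q"
    "Q \<inter> hcube (a - (real k * s) *\<^sub>R One) (r + 2 * (real k * s)) \<noteq> {}"
    using ig_walk_large_member_near[OF _ assms(3,7) \<open>s \<le> obj_size v\<close> assms(4)] by blast
  have "real k * s \<le> real t * s"
    using \<open>k \<le> t\<close> assms(4) by (intro mult_right_mono) auto
  then have "hcube (a - (real k * s) *\<^sub>R One) (r + 2 * (real k * s))
      \<subseteq> hcube (a - (real t * s) *\<^sub>R One) (r + 2 * (real t * s))"
    by (rule hcube_grow_mono)
  then show ?thesis using Q by blast
qed

lemma fat_Union_conn_diam_le:
  fixes \<C> :: "'a::euclidean_space set set"
  assumes "fat c \<C>" "finite \<C>" "\<forall>S\<in>\<C>. bounded S" "\<forall>X\<in>\<C>t. X \<subseteq> \<C> \<and> conn_diam_le X t"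
  shows "fat (real (3 * t + 1) ^ DIM('a) * c) (Union ` \<C>t)"
  unfolding fat_def
proof (intro allI impI)
  fix r :: real and a :: 'a assume "0 \<le> r"
  define s where "s = r / real (Suc t)"
  have "0 \<le> s" and r: "r = real (Suc t) * s"
    using \<open>0 \<le> r\<close> by (simp_all add: s_def)
  define b where "b = a - (real t * s) *\<^sub>R One"
  have big_cube: "hcube (a - (real t * s) *\<^sub>R One) (r + 2 * (real t * s))
      = hcube b (real (3 * t + 1) * s)"
    by (simp add: b_def r algebra_simps)
  obtain P where P: "finite P" "real (card P) \<le> real (3 * t + 1) ^ DIM('a) * c"
    "\<forall>S\<in>\<C>. s \<le> obj_size S \<and> S \<inter> hcube b (real (3 * t + 1) * s) \<noteq> {} \<longrightarrow> S \<inter> P \<noteq> {}"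
    using fat_hcube_multiple[OF assms(1) \<open>0 \<le> s\<close>, of "3 * t + 1" b] by auto
  have "S \<inter> P \<noteq> {}" if S: "S \<in> Union ` \<C>t" "r \<le> obj_size S" "S \<inter> hcube a r \<noteq> {}" for S
  proof -
    obtain X where X: "X \<in> \<C>t" "S = \<Union>X" using S(1) by blast
    then have "X \<subseteq> \<C>" "conn_diam_le X t" using assms(4) by auto
    obtain u where "u \<in> X" "u \<inter> hcube a r \<noteq> {}" using S(3) X(2) by blast
    then obtain Q where Q: "Q \<in> X" "s \<le> obj_size Q"
      "Q \<inter> hcube b (real (3 * t + 1) * s) \<noteq> {}"
      using conn_diam_le_large_member_near[OF finite_subset[OF \<open>X \<subseteq> \<C>\<close> assms(2)]
          \<open>conn_diam_le X t\<close> _ \<open>0 \<le> s\<close>, of u a r] \<open>X \<subseteq> \<C>\<close> assms(3) S(2) X(2) r big_cube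
      by auto
    then have "Q \<inter> P \<noteq> {}" using P(3) \<open>X \<subseteq> \<C>\<close> by blast
    then show ?thesis using Q(1) X(2) by blast
  qed
  then show "\<exists>P. finite P \<and> real (card P) \<le> real (3 * t + 1) ^ DIM('a) * c \<and>
      (\<forall>S\<in>Union ` \<C>t. r \<le> obj_size S \<and> S \<inter> hcube a r \<noteq> {} \<longrightarrow> S \<inter> P \<noteq> {})"
    using P(1,2) by blast
qed

lemma grid_count_le:
  fixes c :: real
  assumes "0 \<le> c"
  shows "real (3 * t + 1) ^ d * c \<le> 3 ^ d * c * (real t + 1) ^ (2 * d)"
proof -
  have "real (3 * t + 1) ^ d \<le> (3 * (real t + 1)) ^ d" by (intro power_mono) auto
  also have "\<dots> = 3 ^ d * (real t + 1) ^ d" by (rule power_mult_distrib)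
  also have "\<dots> \<le> 3 ^ d * (real t + 1) ^ (2 * d)" by (intro mult_left_mono power_increasing) auto
  finally have "real (3 * t + 1) ^ d \<le> 3 ^ d * (real t + 1) ^ (2 * d)" .
  from mult_right_mono[OF this assms] show ?thesis by (simp add: ac_simps)
qed

theorem lemma3p2:
  "\<exists>Cd::real. \<forall>(c::real) (\<C>::'a::euclidean_space set set) (t::nat) (\<C>t::'a set set set).
     c \<ge> 1 \<longrightarrow> finite \<C> \<longrightarrow> (\<forall>S\<in>\<C>. bounded S) \<longrightarrow> fat c \<C> \<longrightarrow>
     (\<forall>X\<in>\<C>t. X \<noteq> {} \<and> X \<subseteq> \<C> \<and> conn_diam_le X t) \<longrightarrow>
     fat (Cd * c * (real t + 1) ^ (2 * DIM('a))) (Union ` \<C>t)"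
proof (intro exI[of _ "3 ^ DIM('a)"] allI impI)
  fix c :: real and \<C> :: "'a set set" and t :: nat and \<C>t :: "'a set set set"
  assume "c \<ge> 1" "finite \<C>" "\<forall>S\<in>\<C>. bounded S" "fat c \<C>"
    "\<forall>X\<in>\<C>t. X \<noteq> {} \<and> X \<subseteq> \<C> \<and> conn_diam_le X t"
  then have "fat (real (3 * t + 1) ^ DIM('a) * c) (Union ` \<C>t)"
    by (intro fat_Union_conn_diam_le) auto
  moreover have "real (3 * t + 1) ^ DIM('a) * c \<le> 3 ^ DIM('a) * c * (real t + 1) ^ (2 * DIM('a))"
    using fat_nonneg[OF \<open>fat c \<C>\<close>] by (rule grid_count_le)
  ultimately show "fat (3 ^ DIM('a) * c * (real t + 1) ^ (2 * DIM('a))) (Union ` \<C>t)"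
    by (rule fat_mono)
qed

end
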